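(* For any positive integer $n$: (1) the set $\mathcal{B}^0_n$ of well-labelled positive paths $(\mathbf{p},\sigma)$ of size $n\ge2$ with $p_1=0$ is in bijection with $[n]\times\mathcal{B}_{n-1}$; (2) the set $\mathcal{B}'_n$ is in bijection with the set $\mathcal{A}_n$ of well-labelled Motzkin paths of size $n$; (3) the set $\mathcal{B}''_n$ is in bijection with the set $\mathcal{D}_n$ of ordered pairs $((I',P'),(I'',P''))$ such that $I'\subseteq[n]$, $I''=[n]\setminus I'$, $P'$ is a well-labelled Motzkin path of size $|I'|$ and $P''$ is a well-labelled positive path of size $|I''|$.
   Context: A well-labelled path of size $n$ is a pair $(\mathbf{p},\sigma)$ where $\mathbf{p}=p_1\ldots p_{n-1}$ is a word on $\{-1,0,+1\}$ and $\sigma$ is a permutation of $[n]$ such that $p_i=-1$ implies $\sigma_i<\sigma_{i+1}$ and $p_i=1$ implies $\sigma_i>\sigma_{i+1}$. It is Motzkin if $\sum_{i=1}^j p_i\ge0$ for all $j=1,\ldots,n-2$ and $\sum_{i=1}^{n-1}p_i=-1$; it is positive if $\sum_{i=1}^jp_i\ge0$ for all $j=1,\ldots,n-1$. $\mathcal{B}_m$ denotes the set of well-labelled positive paths of size $m$ ($\mathcal{B}_0=\emptyset$). Let $\mathcal{B}^1_n$ be the set of well-labelled positive paths of size $n\ge2$ with $p_1=1$. For $(\mathbf{p},\sigma)\in\mathcal{B}^1_n$ let $k$ be the greatest integer $k\le n$ such that $\sum_{i=1}^{j-1}p_i\ge1$ for all $j=2,\ldots,k-1$ and $\sum_{i=1}^{k-1}p_i=1$.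 Then $\mathcal{B}'_n$ is the set of paths in $\mathcal{B}^1_n$ with $k=n$, and $\mathcal{B}''_n=\mathcal{B}^1_n\setminus\mathcal{B}'_n$. *)

theory Defs
  imports Main
begin

text \<open>A path of size n is a pair (p, sigma): p is the word p_1 ... p_(n-1) as an int list
  (p_i = p ! (i-1)), sigma is the permutation of [n] = {1..n} in one-line notation
  as a nat list (sigma_i = sigma ! (i-1)).\<close>

type_synonym lpath = "int list \<times> nat list"

definition well_labelled :: "nat \<Rightarrow> lpath \<Rightarrow> bool" where
  "well_labelled n P \<longleftrightarrow> (case P of (p, \<sigma>) \<Rightarrow>
     n \<ge> 1 \<and> length p = n - 1 \<and> set p \<subseteq> {-1, 0, 1} \<and>
     length \<sigma> = n \<and> distinct \<sigma> \<and> set \<sigma> = {1..n} \<and>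
     (\<forall>i < n - 1. (p ! i = -1 \<longrightarrow> \<sigma> ! i < \<sigma> ! (i+1)) \<and>
                    (p ! i = 1 \<longrightarrow> \<sigma> ! i > \<sigma> ! (i+1))))"

definition psum :: "int list \<Rightarrow> nat \<Rightarrow> int" where
  "psum p j = sum_list (take j p)"

definition is_motzkin :: "nat \<Rightarrow> lpath \<Rightarrow> bool" where
  "is_motzkin n P \<longleftrightarrow> (\<forall>j \<in> {1..n-2}. psum (fst P) j \<ge> 0) \<and> psum (fst P) (n - 1) = -1"

definition is_positive :: "nat \<Rightarrow> lpath \<Rightarrow> bool" where
  "is_positive n P \<longleftrightarrow> (\<forall>j \<in> {1..n-1}. psum (fst P) j \<ge> 0)"

definition A_set :: "nat \<Rightarrow> lpath set" where
  "A_set n = {P. well_labelled n P \<and> is_motzkin n P}"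

text \<open>B_n: well-labelled positive paths of size n (B_0 is empty since size \<ge> 1 is required).\<close>
definition B_set :: "nat \<Rightarrow> lpath set" where
  "B_set n = {P. well_labelled n P \<and> is_positive n P}"

definition B0_set :: "nat \<Rightarrow> lpath set" where
  "B0_set n = {P \<in> B_set n. n \<ge> 2 \<and> fst P \<noteq> [] \<and> hd (fst P) = 0}"

definition B1_set :: "nat \<Rightarrow> lpath set" where
  "B1_set n = {P \<in> B_set n. n \<ge> 2 \<and> fst P \<noteq> [] \<and> hd (fst P) = 1}"

definition k_index :: "nat \<Rightarrow> int list \<Rightarrow> nat" where
  "k_index n p = (GREATEST k. k \<le> n \<and> (\<forall>j \<in> {2..k-1}. psum p (j-1) \<ge> 1) \<and> psum p (k-1) = 1)"

definition B'_set :: "nat \<Rightarrow> lpath set" where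
  "B'_set n = {P \<in> B1_set n. k_index n (fst P) = n}"

definition B''_set :: "nat \<Rightarrow> lpath set" where
  "B''_set n = B1_set n - B'_set n"

definition D_set :: "nat \<Rightarrow> ((nat set \<times> lpath) \<times> (nat set \<times> lpath)) set" where
  "D_set n = {((I', P'), (I'', P'')). I' \<subseteq> {1..n} \<and> I'' = {1..n} - I' \<and>
      P' \<in> A_set (card I') \<and> P'' \<in> B_set (card I'')}"

end

theory Submission
  imports Defs
begin

text \<open>Labels are allowed to come from an arbitrary finite set \<open>I\<close>: compatibility of a step word
  with a labelling only compares adjacent labels, so it is transported by the order isomorphism
  between \<open>{1..card I}\<close> and \<open>I\<close>, and no explicit standardisation is ever needed.

  (1) Deleting the initial flat step and its label \<open>i\<close> leaves a positive path labelled by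
  \<open>[n] - {i}\<close>. (2) Reading a path backwards with negated steps preserves well-labelledness; it
  turns the Motzkin paths \<open>q\<cdot>(-1)\<close> (with \<open>q\<close> an excursion) into the paths \<open>1\<cdot>q'\<close> of \<open>B'\<^sub>n\<close>,
  for which the index \<open>k\<close> equals \<open>n\<close> exactly when \<open>q'\<close> is an excursion. (3) A path \<open>1\<cdot>q\<close> of
  \<open>B''\<^sub>n\<close> factors uniquely as \<open>1\<cdot>u\<cdot>s\<cdot>r\<close> with \<open>u\<close> an excursion, \<open>s = \<plusminus>1\<close> and \<open>r\<close> positive
  (\<open>s\<close> is the first step down to height 0 or, if there is none, the last step up from height 1).
  Splitting the labels accordingly, the reversal of \<open>1\<cdot>u\<close> is the Motzkin component, \<open>r\<close> the
  positive one, and \<open>s\<close> is recovered from the labels on either side of it.\<close>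

definition step_compatible :: "int \<Rightarrow> nat \<Rightarrow> nat \<Rightarrow> bool" where
  "step_compatible x a b \<longleftrightarrow> (x = -1 \<longrightarrow> a < b) \<and> (x = 1 \<longrightarrow> b < a)"

fun compatible :: "int list \<Rightarrow> nat list \<Rightarrow> bool" where
  "compatible [] _ = True"
| "compatible (x # p) (a # b # w) = (step_compatible x a b \<and> compatible p (b # w))"
| "compatible _ _ = False"

definition labelled :: "nat set \<Rightarrow> lpath \<Rightarrow> bool" where
  "labelled I P \<longleftrightarrow> (case P of (p, w) \<Rightarrow> set p \<subseteq> {-1, 0, 1} \<and> length w = length p + 1 \<and>
     distinct w \<and> set w = I \<and> compatible p w)"

lemma compatible_iff_nth:
  "length w = length p + 1 \<Longrightarrow>
   compatible p w \<longleftrightarrow> (\<forall>i < length p. step_compatible (p ! i) (w ! i) (w ! (i + 1)))"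
proof (induction p arbitrary: w)
  case (Cons x p)
  then obtain a b v where "w = a # b # v"
    by (metis Suc_eq_plus1 length_Suc_conv)
  with Cons show ?case
    using less_Suc_eq_0_disj by (auto simp: nth_Cons split: nat.split)
qed simp

lemma well_labelled_iff_labelled: "well_labelled n P \<longleftrightarrow> labelled {1..n} P"
proof (cases P)
  case (Pair p w)
  have "length w = n" if "distinct w" "set w = {1..n}"
    using distinct_card[OF that(1)] that(2) by simp
  then show ?thesis
    unfolding Pair well_labelled_def labelled_def
    by (cases w) (auto simp: compatible_iff_nth step_compatible_def)
qed

lemma compatible_append:
  "length w = length p + 1 \<Longrightarrow>
   compatible (p @ x # r) (w @ b # v) \<longleftrightarrow>
     compatible p w \<and> step_compatible x (last w) b \<and> compatible r (b # v)"
proof (induction p arbitrary: w)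
  case Nil
  then obtain a where "w = [a]" by (cases w) auto
  then show ?case by simp
next
  case (Cons y p)
  then obtain a c u where "w = a # c # u"
    by (metis Suc_eq_plus1 length_Suc_conv)
  with Cons.prems Cons.IH[of "c # u"] show ?case by simp
qed

lemma compatible_rev:
  "length w = length p + 1 \<Longrightarrow> compatible (map uminus (rev p)) (rev w) \<longleftrightarrow> compatible p w"
proof (induction p arbitrary: w)
  case Nil
  then obtain a where "w = [a]" by (cases w) auto
  then show ?case by simp
next
  case (Cons x p)
  then obtain a b v where w: "w = a # b # v"
    by (metis Suc_eq_plus1 length_Suc_conv)
  have "compatible (map uminus (rev (x # p))) (rev w)
      \<longleftrightarrow> compatible (map uminus (rev p) @ [- x]) (rev (b # v) @ [a])"
    by (simp add: w)
  also have "\<dots> \<longleftrightarrow> compatible (map uminus (rev p)) (rev (b # v)) \<and> step_compatible (- x) b a"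
    using Cons.prems compatible_append[of "rev (b # v)" "map uminus (rev p)" "- x" "[]" a "[]"]
    by (simp add: w)
  also have "\<dots> \<longleftrightarrow> compatible p (b # v) \<and> step_compatible x a b"
    using Cons.IH[of "b # v"] Cons.prems by (auto simp: w step_compatible_def)
  finally show ?case by (auto simp: w)
qed

lemma compatible_map_strict_mono:
  "strict_mono_on (set w) h \<Longrightarrow> compatible p (map h w) \<longleftrightarrow> compatible p w"
proof (induction p w rule: compatible.induct)
  case (2 x p a b w)
  have "strict_mono_on (set (b # w)) h"
    using "2.prems" by (rule monotone_on_subset) auto
  moreover have "h a < h b \<longleftrightarrow> a < b" "h b < h a \<longleftrightarrow> b < a"
    using "2.prems" by (auto simp: strict_mono_on_less)
  ultimately show ?case
    using "2.IH" by (simp add: step_compatible_def)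
qed auto

lemma labelled_Cons_0:
  "labelled I (0 # r, a # w) \<longleftrightarrow> a \<in> I \<and> labelled (I - {a}) (r, w)"
  by (cases w) (auto simp: labelled_def step_compatible_def)

section \<open>Relabelling along order isomorphisms\<close>

lemma labelled_map_iso:
  assumes "bij_betw h J I" "strict_mono_on J h" "labelled J (p, w)"
  shows "labelled I (p, map h w)"
proof -
  have "set w = J" "distinct w" using assms(3) by (auto simp: labelled_def)
  then show ?thesis
    using assms compatible_map_strict_mono[of w h p]
    by (auto simp: labelled_def distinct_map bij_betw_def inj_on_subset)
qed

lemma strict_mono_on_inv_into:
  fixes h :: "'a :: linorder \<Rightarrow> 'b :: linorder"
  assumes "bij_betw h J I" "strict_mono_on J h"
  shows "strict_mono_on I (inv_into J h)"
proof (rule strict_mono_onI)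
  fix x y assume xy: "x \<in> I" "y \<in> I" "x < y"
  have "inv_into J h x \<in> J" "inv_into J h y \<in> J"
    using xy assms(1) by (auto intro: inv_into_into simp: bij_betw_def)
  moreover have "h (inv_into J h x) = x" "h (inv_into J h y) = y"
    using xy assms(1) by (auto intro: f_inv_into_f simp: bij_betw_def)
  ultimately show "inv_into J h x < inv_into J h y"
    using xy(3) strict_mono_on_less[OF assms(2)] by metis
qed

definition sorted_enum :: "nat set \<Rightarrow> nat \<Rightarrow> nat" where
  "sorted_enum I i = sorted_list_of_set I ! (i - 1)"

lemma sorted_enum_iso:
  assumes "finite I"
  shows "bij_betw (sorted_enum I) {1..card I} I" "strict_mono_on {1..card I} (sorted_enum I)"
proof -
  let ?xs = "sorted_list_of_set I"
  have "bij_betw ((!) ?xs) {..<card I} I"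
    using assms by (intro bij_betw_nth) auto
  moreover have "bij_betw (\<lambda>i. i - 1) {1..card I} {..<card I}"
    by (rule bij_betw_byWitness[where f' = Suc]) auto
  ultimately have "bij_betw ((!) ?xs \<circ> (\<lambda>i. i - 1)) {1..card I} I"
    by (rule bij_betw_trans[rotated])
  then show "bij_betw (sorted_enum I) {1..card I} I"
    by (simp add: sorted_enum_def [abs_def] comp_def)
  show "strict_mono_on {1..card I} (sorted_enum I)"
  proof (rule strict_mono_onI)
    fix i j assume "i \<in> {1..card I}" "j \<in> {1..card I}" "i < j"
    then show "sorted_enum I i < sorted_enum I j"
      using sorted_wrt_nth_less[OF strict_sorted_list_of_set, of "i - 1" "j - 1" I]
      by (simp add: sorted_enum_def)
  qed
qed

definition relabel :: "nat set \<Rightarrow> lpath \<Rightarrow> lpath" where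
  "relabel I = apsnd (map (sorted_enum I))"

definition unlabel :: "nat set \<Rightarrow> lpath \<Rightarrow> lpath" where
  "unlabel I = apsnd (map (inv_into {1..card I} (sorted_enum I)))"

lemma fst_relabel [simp]: "fst (relabel I P) = fst P"
  and fst_unlabel [simp]: "fst (unlabel I P) = fst P"
  by (simp_all add: relabel_def unlabel_def)

lemma labelled_relabel: "finite I \<Longrightarrow> labelled {1..card I} P \<Longrightarrow> labelled I (relabel I P)"
  using labelled_map_iso[OF sorted_enum_iso] by (cases P) (simp add: relabel_def)

lemma labelled_unlabel:
  assumes "finite I" "labelled I P"
  shows "labelled {1..card I} (unlabel I P)"
proof -
  note iso = sorted_enum_iso[OF assms(1)]
  show ?thesis
    using labelled_map_iso[OF bij_betw_inv_into[OF iso(1)] strict_mono_on_inv_into[OF iso]] assms(2)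
    by (cases P) (simp add: unlabel_def)
qed

lemma unlabel_relabel: "finite I \<Longrightarrow> labelled {1..card I} P \<Longrightarrow> unlabel I (relabel I P) = P"
  using bij_betw_inv_into_left[OF sorted_enum_iso(1)]
  by (cases P) (auto simp: relabel_def unlabel_def labelled_def intro!: map_idI)

lemma relabel_unlabel: "finite I \<Longrightarrow> labelled I P \<Longrightarrow> relabel I (unlabel I P) = P"
  using bij_betw_inv_into_right[OF sorted_enum_iso(1)]
  by (cases P) (auto simp: relabel_def unlabel_def labelled_def intro!: map_idI)

section \<open>Reversal and concatenation of labelled paths\<close>

definition rev_path :: "lpath \<Rightarrow> lpath" where
  "rev_path P = (map uminus (rev (fst P)), rev (snd P))"

lemma fst_rev_path: "fst (rev_path P) = map uminus (rev (fst P))"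
  by (simp add: rev_path_def)

lemma rev_path_rev_path [simp]: "rev_path (rev_path P) = P"
  by (simp add: rev_path_def rev_map)

lemma labelled_rev_path [simp]: "labelled I (rev_path P) \<longleftrightarrow> labelled I P"
  by (cases P) (auto simp: labelled_def rev_path_def compatible_rev)

text \<open>Of the two nonflat steps, the connecting step is the one compatible with the adjacent
  labels, which differ whenever the label sets are disjoint.\<close>

definition join :: "lpath \<Rightarrow> lpath \<Rightarrow> lpath" where
  "join P R = (fst P @ (if last (snd P) < hd (snd R) then -1 else 1) # fst R, snd P @ snd R)"

lemma join_obtain_step:
  obtains s where "s \<in> {-1, 1}" "join P R = (fst P @ s # fst R, snd P @ snd R)"
  using that[of "if last (snd P) < hd (snd R) then -1 else 1"] by (simp add: join_def)

lemma labelled_join: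
  assumes "labelled I (p, w)" "labelled J (r, v)" "I \<inter> J = {}"
  shows "labelled (I \<union> J) (join (p, w) (r, v))"
proof -
  obtain b u where v: "v = b # u"
    using assms(2) by (cases v) (auto simp: labelled_def)
  have "w \<noteq> []" using assms(1) by (auto simp: labelled_def)
  then have "last w \<in> I" "b \<in> J"
    using assms(1,2) by (auto simp: labelled_def v)
  then have "last w \<noteq> b" using assms(3) by blast
  then have "step_compatible (if last w < b then -1 else 1) (last w) b"
    by (auto simp: step_compatible_def)
  with assms show ?thesis
    unfolding join_def labelled_def v by (auto simp: compatible_append)
qed

lemma labelled_split:
  assumes "labelled K (p @ s # r, w @ v)" "length w = length p + 1" "s \<in> {-1, 1}"
  shows "labelled (set w) (p, w)" "labelled (set v) (r, v)"
    "join (p, w) (r, v) = (p @ s # r, w @ v)"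
proof -
  obtain b u where v: "v = b # u"
    using assms(1,2) by (cases v) (auto simp: labelled_def)
  have c: "compatible p w" "step_compatible s (last w) b" "compatible r v"
    using assms(1,2) by (auto simp: v labelled_def compatible_append)
  show "labelled (set w) (p, w)" "labelled (set v) (r, v)"
    using assms(1,2) c by (auto simp: v labelled_def)
  show "join (p, w) (r, v) = (p @ s # r, w @ v)"
    using c(2) assms(3) by (auto simp: v join_def step_compatible_def)
qed

lemma join_inj:
  assumes "join (p, w) R = join (p', w') R'" "labelled I (p, w)" "labelled I' (p', w')"
    "length p = length p'"
  shows "(p, w) = (p', w')" "R = R'"
proof -
  have "length w = length w'"
    using assms(2-4) by (simp add: labelled_def)
  then show "(p, w) = (p', w')" "R = R'"
    using assms(1,4) by (auto simp: join_def prod_eq_iff)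
qed

section \<open>Walks staying at nonnegative height\<close>

fun nonneg_walk :: "int \<Rightarrow> int list \<Rightarrow> bool" where
  "nonneg_walk c [] = True"
| "nonneg_walk c (x # p) \<longleftrightarrow> 0 \<le> c + x \<and> nonneg_walk (c + x) p"

definition excursion :: "int list \<Rightarrow> bool" where
  "excursion q \<longleftrightarrow> nonneg_walk 0 q \<and> sum_list q = 0"

lemma psum_Cons_Suc: "psum (x # p) (Suc j) = x + psum p j"
  by (simp add: psum_def)

lemma nonneg_walk_iff_psum:
  "nonneg_walk c p \<longleftrightarrow> (\<forall>j \<in> {1..length p}. 0 \<le> c + psum p j)"
proof (induction p arbitrary: c)
  case (Cons x p)
  have "(\<forall>j \<in> {1..length (x # p)}. 0 \<le> c + psum (x # p) j)
     \<longleftrightarrow> 0 \<le> c + x \<and> (\<forall>j \<in> {1..length p}. 0 \<le> (c + x) + psum p j)"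
    (is "?L \<longleftrightarrow> ?R")
  proof
    assume ?L
    then show ?R
      using bspec[OF \<open>?L\<close>, of 1] bspec[OF \<open>?L\<close>, of "Suc _"]
      by (auto simp: psum_def add.assoc)
  next
    assume ?R
    show ?L
    proof
      fix j assume "j \<in> {1..length (x # p)}"
      then obtain i where "j = Suc i" "i \<le> length p" by (cases j) auto
      then show "0 \<le> c + psum (x # p) j"
        using \<open>?R\<close> by (cases i) (auto simp: psum_def add.assoc)
    qed
  qed
  then show ?case using Cons.IH by simp
qed simp

lemma nonneg_walk_append:
  "nonneg_walk c (p @ q) \<longleftrightarrow> nonneg_walk c p \<and> nonneg_walk (c + sum_list p) q"
  by (induction p arbitrary: c) (auto simp: add.assoc)

lemma nonneg_walk_sum_list: "nonneg_walk c p \<Longrightarrow> 0 \<le> c \<Longrightarrow> 0 \<le> c + sum_list p"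
proof (induction p arbitrary: c)
  case (Cons x p)
  then have "0 \<le> (c + x) + sum_list p" by simp
  then show ?case by (simp add: add.assoc)
qed simp

lemma nonneg_walk_mono: "nonneg_walk c p \<Longrightarrow> c \<le> d \<Longrightarrow> nonneg_walk d p"
  by (induction p arbitrary: c d) force+

lemma sum_list_map_uminus: "sum_list (map uminus xs) = - sum_list (xs :: int list)"
  using uminus_sum_list_map[of id xs] by simp

lemma nonneg_walk_neg_rev:
  "nonneg_walk c q \<Longrightarrow> 0 \<le> c \<Longrightarrow> 0 \<le> c + sum_list q \<Longrightarrow>
   nonneg_walk (c + sum_list q) (map uminus (rev q))"
proof (induction q arbitrary: c)
  case (Cons x q)
  have "nonneg_walk (c + x + sum_list q) (map uminus (rev q))"
    using Cons.IH[of "c + x"] Cons.prems by (simp add: add.assoc)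
  with Cons.prems show ?case
    by (simp add: nonneg_walk_append sum_list_map_uminus algebra_simps)
qed simp

lemma excursion_neg_rev [simp]: "excursion (map uminus (rev q)) \<longleftrightarrow> excursion q"
proof -
  have "excursion (map uminus (rev q))" if "excursion q" for q :: "int list"
    using that nonneg_walk_neg_rev[of 0 q] by (simp add: excursion_def sum_list_map_uminus)
  from this this[of "map uminus (rev q)"] show ?thesis
    by (auto simp: rev_map)
qed

lemma first_passage:
  assumes "\<not> nonneg_walk c r" "0 \<le> c" "set r \<subseteq> {-1, 0, 1}"
  shows "\<exists>t w. r = t @ (-1) # w \<and> nonneg_walk c t \<and> c + sum_list t = 0"
  using assms
proof (induction r arbitrary: c)
  case (Cons x r)
  show ?case
  proof (cases "c + x < 0")
    case True
    then have "c = 0" "x = -1" using Cons.prems by auto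
    then show ?thesis by (intro exI[of _ "[]"] exI[of _ r]) simp
  next
    case False
    with Cons.prems have "\<not> nonneg_walk (c + x) r" "0 \<le> c + x" "set r \<subseteq> {-1, 0, 1}"
      by auto
    then obtain t w where "r = t @ (-1) # w" "nonneg_walk (c + x) t" "c + x + sum_list t = 0"
      using Cons.IH by blast
    with False show ?thesis
      by (intro exI[of _ "x # t"] exI[of _ w]) (auto simp: add.assoc)
  qed
qed simp

lemma last_passage:
  assumes "nonneg_walk 0 q" "1 \<le> sum_list q" "set q \<subseteq> {-1, 0, 1}"
  shows "\<exists>u r. q = u @ 1 # r \<and> excursion u \<and> nonneg_walk 0 r"
  using assms
proof (induction q rule: rev_induct)
  case (snoc x q)
  have q: "nonneg_walk 0 q" "0 \<le> sum_list q + x"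
    using snoc.prems by (auto simp: nonneg_walk_append)
  show ?case
  proof (cases "1 \<le> sum_list q")
    case True
    with snoc q obtain u r where "q = u @ 1 # r" "excursion u" "nonneg_walk 0 r"
      by auto
    with snoc.prems show ?thesis
      by (intro exI[of _ u] exI[of _ "r @ [x]"]) (auto simp: excursion_def nonneg_walk_append)
  next
    case False
    then have "sum_list q = 0" "x = 1"
      using nonneg_walk_sum_list[OF q(1)] snoc.prems by auto
    with q show ?thesis
      by (intro exI[of _ q] exI[of _ "[]"]) (simp add: excursion_def)
  qed
qed simp

lemma nonneg_walk_1_split:
  assumes "nonneg_walk 1 q" "\<not> excursion q" "set q \<subseteq> {-1, 0, 1}"
  shows "\<exists>u s r. q = u @ s # r \<and> excursion u \<and> s \<in> {-1, 1} \<and> nonneg_walk 0 r"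
proof (cases "nonneg_walk 0 q")
  case False
  then obtain t w where tw: "q = t @ (-1) # w" "nonneg_walk 0 t" "sum_list t = 0"
    using first_passage[of 0 q] assms(3) by auto
  then have "nonneg_walk 0 w" using assms(1) by (simp add: nonneg_walk_append)
  with tw show ?thesis by (auto simp: excursion_def)
next
  case True
  then have "1 \<le> sum_list q"
    using assms(2) nonneg_walk_sum_list[of 0 q] by (auto simp: excursion_def)
  then show ?thesis
    using last_passage[OF True _ assms(3)] by blast
qed

lemma nonneg_walk_1_join:
  assumes "excursion u" "s \<in> {-1, 1}" "nonneg_walk 0 r"
  shows "nonneg_walk 1 (u @ s # r)" "\<not> excursion (u @ s # r)"
proof -
  show "nonneg_walk 1 (u @ s # r)"
    using assms nonneg_walk_mono[of 0 u 1] nonneg_walk_mono[of 0 r "1 + s"]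
    by (auto simp: excursion_def nonneg_walk_append)
  show "\<not> excursion (u @ s # r)"
    using assms nonneg_walk_sum_list[OF assms(3)]
    by (auto simp: excursion_def nonneg_walk_append)
qed

lemma excursion_split_unique:
  assumes eq: "u @ s # r = u' @ s' # r'"
    and u: "excursion u" "s \<in> {-1, 1}" "nonneg_walk 0 r"
    and u': "excursion u'" "s' \<in> {-1, 1}" "nonneg_walk 0 r'"
  shows "u = u'"
proof -
  \<comment> \<open>If \<open>u1\<close> were a proper prefix \<open>u1 @ a # t\<close> of an excursion, then \<open>a = 1\<close> and
    \<open>t\<close> would sum to \<open>-1\<close>, although it starts the nonnegative walk following \<open>u1\<close>.\<close>
  have no_overlap: False
    if "u2 = u1 @ a # t" "r1 = t @ b # rr" "excursion u1" "excursion u2" "a \<in> {-1, 1}"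
      "nonneg_walk 0 r1"
    for u1 u2 a t b rr r1
  proof -
    have "a = 1"
      using that(1-5) by (auto simp: excursion_def nonneg_walk_append)
    then have "sum_list t = -1"
      using that(1,3,4) by (simp add: excursion_def)
    moreover have "nonneg_walk 0 t"
      using that(2,6) by (simp add: nonneg_walk_append)
    ultimately show False
      using nonneg_walk_sum_list[of 0 t] by simp
  qed
  from eq obtain us where
    "u = u' @ us \<and> us @ s # r = s' # r' \<or> u @ us = u' \<and> s # r = us @ s' # r'"
    by (auto simp: append_eq_append_conv2)
  then show ?thesis
  proof
    assume h: "u = u' @ us \<and> us @ s # r = s' # r'"
    show ?thesis
      using h no_overlap[of u u' s' "tl us" r' s r] u u' by (cases us) auto
  next
    assume h: "u @ us = u' \<and> s # r = us @ s' # r'"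
    show ?thesis
      using h no_overlap[of u' u s "tl us" r s' r'] u u' by (cases us) auto
  qed
qed

lemma labelled_length:
  "labelled I (p, w) \<Longrightarrow> length w = card I \<and> length p = card I - 1"
  by (auto simp: labelled_def simp flip: distinct_card)

lemma psum_append_le: "j \<le> length p \<Longrightarrow> psum (p @ q) j = psum p j"
  by (simp add: psum_def)

lemma psum_length: "psum p (length p) = sum_list p"
  by (simp add: psum_def)

lemma B_set_iff: "P \<in> B_set n \<longleftrightarrow> labelled {1..n} P \<and> nonneg_walk 0 (fst P)"
  by (cases P) (auto simp: B_set_def well_labelled_iff_labelled is_positive_def
      nonneg_walk_iff_psum dest: labelled_length)

definition motzkin_walk :: "int list \<Rightarrow> bool" where
  "motzkin_walk p \<longleftrightarrow> (\<exists>q. p = q @ [-1] \<and> excursion q)"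

lemma motzkin_walk_iff_psum:
  assumes "set p \<subseteq> {-1, 0, 1}"
  shows "motzkin_walk p \<longleftrightarrow> (\<forall>j \<in> {1..length p - 1}. 0 \<le> psum p j) \<and> psum p (length p) = -1"
proof (cases p rule: rev_cases)
  case Nil
  then show ?thesis by (simp add: motzkin_walk_def psum_def)
next
  case (snoc q x)
  have "(\<forall>j \<in> {1..length p - 1}. 0 \<le> psum p j) \<longleftrightarrow> nonneg_walk 0 q"
    by (simp add: snoc nonneg_walk_iff_psum psum_append_le)
  moreover have "psum p (length p) = sum_list q + x"
    by (simp add: snoc psum_def)
  moreover have "x \<in> {-1, 0, 1}" using assms snoc by simp
  ultimately show ?thesis
    using nonneg_walk_sum_list[of 0 q] by (auto simp: snoc motzkin_walk_def excursion_def)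
qed

lemma A_set_iff: "P \<in> A_set n \<longleftrightarrow> labelled {1..n} P \<and> motzkin_walk (fst P)"
proof (cases P)
  case (Pair p w)
  have "is_motzkin n (p, w) \<longleftrightarrow> motzkin_walk p" if "labelled {1..n} (p, w)"
    using labelled_length[OF that] that
    by (auto simp: is_motzkin_def motzkin_walk_iff_psum labelled_def)
  then show ?thesis
    by (auto simp: Pair A_set_def well_labelled_iff_labelled)
qed

lemma Greatest_nat_eq_bound_iff:
  fixes n :: nat
  assumes "P k" "\<And>k. P k \<Longrightarrow> k \<le> n"
  shows "(GREATEST k. P k) = n \<longleftrightarrow> P n"
  using GreatestI_nat[of P k n] Greatest_equality[of P n] assms by auto

lemma excursion_iff_psum:
  "excursion q \<longleftrightarrow> (\<forall>i < length q. 0 \<le> psum q i) \<and> sum_list q = 0"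
proof -
  have "(\<forall>j \<in> {1..length q}. 0 \<le> psum q j) \<longleftrightarrow> (\<forall>i < length q. 0 \<le> psum q i)"
    if "sum_list q = 0"
  proof
    assume H: "\<forall>j \<in> {1..length q}. 0 \<le> psum q j"
    show "\<forall>i < length q. 0 \<le> psum q i"
    proof (intro allI impI)
      fix i assume "i < length q"
      then show "0 \<le> psum q i" using H by (cases i) (auto simp: psum_def)
    qed
  next
    assume H: "\<forall>i < length q. 0 \<le> psum q i"
    show "\<forall>j \<in> {1..length q}. 0 \<le> psum q j"
      using H that by (auto simp: psum_length le_less)
  qed
  then show ?thesis
    by (auto simp: excursion_def nonneg_walk_iff_psum)
qed

lemma k_index_Cons_1_iff:
  assumes "length q = n - 2" "2 \<le> n"
  shows "k_index n (1 # q) = n \<longleftrightarrow> excursion q"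
proof -
  have psum_1: "psum (1 # q) (Suc i) = 1 + psum q i" for i
    by (rule psum_Cons_Suc)
  have "k_index n (1 # q) = n \<longleftrightarrow>
      (\<forall>j \<in> {2..n-1}. 1 \<le> psum (1 # q) (j - 1)) \<and> psum (1 # q) (n - 1) = 1"
    unfolding k_index_def using assms
    by (subst Greatest_nat_eq_bound_iff[where k = 2]) (auto simp: psum_def)
  also have "\<dots> \<longleftrightarrow> (\<forall>i < length q. 0 \<le> psum q i) \<and> sum_list q = 0"
  proof -
    have "(\<forall>j \<in> {2..n-1}. 1 \<le> psum (1 # q) (j - 1)) \<longleftrightarrow> (\<forall>i < length q. 0 \<le> psum q i)"
    proof
      assume H: "\<forall>j \<in> {2..n-1}. 1 \<le> psum (1 # q) (j - 1)"
      show "\<forall>i < length q. 0 \<le> psum q i"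
      proof (intro allI impI)
        fix i assume "i < length q"
        then have "i + 2 \<in> {2..n-1}" using assms by auto
        from H[rule_format, OF this] show "0 \<le> psum q i" by (simp add: psum_1)
      qed
    next
      assume H: "\<forall>i < length q. 0 \<le> psum q i"
      show "\<forall>j \<in> {2..n-1}. 1 \<le> psum (1 # q) (j - 1)"
      proof
        fix j assume "j \<in> {2..n-1}"
        then have "j - 2 < length q" "j - 1 = Suc (j - 2)" using assms by auto
        with H show "1 \<le> psum (1 # q) (j - 1)" by (simp add: psum_1)
      qed
    qed
    moreover have "n - 1 = Suc (length q)" using assms by simp
    ultimately show ?thesis by (simp add: psum_1 psum_length)
  qed
  also have "\<dots> \<longleftrightarrow> excursion q"
    by (rule excursion_iff_psum[symmetric])
  finally show ?thesis .
qed

lemma labelled_Cons_size: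
  "labelled {1..n} (x # p, w) \<Longrightarrow> 2 \<le> n \<and> length p = n - 2"
  using labelled_length[of "{1..n}" "x # p" w] by auto

lemma B0_set_iff:
  "P \<in> B0_set n \<longleftrightarrow> labelled {1..n} P \<and> (\<exists>r. fst P = 0 # r \<and> nonneg_walk 0 r)"
  using labelled_Cons_size[of n 0 _ "snd P"]
  by (cases P; cases "fst P") (auto simp: B0_set_def B_set_iff)

lemma B1_set_iff:
  "P \<in> B1_set n \<longleftrightarrow> labelled {1..n} P \<and> (\<exists>q. fst P = 1 # q \<and> nonneg_walk 1 q)"
  using labelled_Cons_size[of n 1 _ "snd P"]
  by (cases P; cases "fst P") (auto simp: B1_set_def B_set_iff)

lemma B'_set_iff:
  "P \<in> B'_set n \<longleftrightarrow> labelled {1..n} P \<and> (\<exists>q. fst P = 1 # q \<and> excursion q)"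
proof -
  have "k_index n (1 # q) = n \<longleftrightarrow> excursion q" if "labelled {1..n} (1 # q, w)" for q w
    using labelled_Cons_size[OF that] k_index_Cons_1_iff by blast
  then show ?thesis
    using nonneg_walk_mono[of 0 _ 1]
    by (cases P) (auto simp: B'_set_def B1_set_iff excursion_def)
qed

lemma B''_set_iff:
  "P \<in> B''_set n \<longleftrightarrow> labelled {1..n} P \<and> (\<exists>q. fst P = 1 # q \<and> nonneg_walk 1 q \<and> \<not> excursion q)"
  by (auto simp: B''_set_def B1_set_iff B'_set_iff)

section \<open>The three bijections\<close>

definition detach_flat :: "nat \<Rightarrow> lpath \<Rightarrow> nat \<times> lpath" where
  "detach_flat n P = (hd (snd P), unlabel ({1..n} - {hd (snd P)}) (tl (fst P), tl (snd P)))"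

definition attach_flat :: "nat \<Rightarrow> nat \<times> lpath \<Rightarrow> lpath" where
  "attach_flat n iQ = (case iQ of (i, Q) \<Rightarrow> (0 # fst Q, i # snd (relabel ({1..n} - {i}) Q)))"

lemma B0_setE:
  assumes "P \<in> B0_set n"
  obtains r i w where "P = (0 # r, i # w)" "i \<in> {1..n}" "labelled ({1..n} - {i}) (r, w)"
    "nonneg_walk 0 r"
proof -
  obtain r where r: "labelled {1..n} P" "fst P = 0 # r" "nonneg_walk 0 r"
    using assms by (auto simp: B0_set_iff)
  then obtain i w where "snd P = i # w"
    by (cases P; cases "snd P") (auto simp: labelled_def)
  with r that show ?thesis
    by (cases P) (auto simp: labelled_Cons_0)
qed

lemma B0_set_bij: "bij_betw (detach_flat n) (B0_set n) ({1..n} \<times> B_set (n - 1))"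
proof (rule bij_betw_byWitness[where f' = "attach_flat n"])
  have J: "finite ({1..n} - {i})" "card ({1..n} - {i}) = n - 1" if "i \<in> {1..n}" for i
    using that by auto
  show "\<forall>P \<in> B0_set n. attach_flat n (detach_flat n P) = P"
  proof
    fix P assume "P \<in> B0_set n"
    then obtain r i w where "P = (0 # r, i # w)" "i \<in> {1..n}" "labelled ({1..n} - {i}) (r, w)"
      by (rule B0_setE)
    then show "attach_flat n (detach_flat n P) = P"
      using relabel_unlabel[OF J(1)] by (simp add: attach_flat_def detach_flat_def)
  qed
  show "detach_flat n ` B0_set n \<subseteq> {1..n} \<times> B_set (n - 1)"
  proof (rule image_subsetI)
    fix P assume "P \<in> B0_set n"
    then obtain r i w where "P = (0 # r, i # w)" "i \<in> {1..n}" "labelled ({1..n} - {i}) (r, w)"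
      "nonneg_walk 0 r"
      by (rule B0_setE)
    then show "detach_flat n P \<in> {1..n} \<times> B_set (n - 1)"
      using labelled_unlabel[OF J(1)] J(2) by (simp add: detach_flat_def B_set_iff)
  qed
  show "\<forall>iQ \<in> {1..n} \<times> B_set (n - 1). detach_flat n (attach_flat n iQ) = iQ"
  proof
    fix iQ assume "iQ \<in> {1..n} \<times> B_set (n - 1)"
    then obtain i Q where "iQ = (i, Q)" "i \<in> {1..n}" "labelled {1..n - 1} Q"
      by (auto simp: B_set_iff)
    then show "detach_flat n (attach_flat n iQ) = iQ"
      using unlabel_relabel[OF J(1), of i Q] J(2)
      by (cases Q) (simp add: attach_flat_def detach_flat_def relabel_def)
  qed
  show "attach_flat n ` ({1..n} \<times> B_set (n - 1)) \<subseteq> B0_set n"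
  proof
    fix P assume "P \<in> attach_flat n ` ({1..n} \<times> B_set (n - 1))"
    then obtain i Q where "P = attach_flat n (i, Q)" "i \<in> {1..n}" "labelled {1..n - 1} Q"
      "nonneg_walk 0 (fst Q)"
      by (auto simp: B_set_iff)
    moreover have "labelled ({1..n} - {i}) (fst Q, snd (relabel ({1..n} - {i}) Q))"
      using labelled_relabel[OF J(1), of i Q] J(2) \<open>i \<in> {1..n}\<close> \<open>labelled {1..n - 1} Q\<close>
      by (metis fst_relabel prod.collapse)
    ultimately show "P \<in> B0_set n"
      by (simp add: attach_flat_def B0_set_iff labelled_Cons_0)
  qed
qed

lemma B'_set_bij: "bij_betw rev_path (B'_set n) (A_set n)"
proof (rule bij_betw_byWitness[where f' = rev_path])
  show "rev_path ` B'_set n \<subseteq> A_set n"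
    by (auto simp: B'_set_iff A_set_iff motzkin_walk_def fst_rev_path)
  show "rev_path ` A_set n \<subseteq> B'_set n"
    by (auto simp: B'_set_iff A_set_iff motzkin_walk_def fst_rev_path)
qed simp_all

definition D_labelled :: "nat \<Rightarrow> ((nat set \<times> lpath) \<times> (nat set \<times> lpath)) set" where
  "D_labelled n = {((I', P'), (I'', P'')). I' \<subseteq> {1..n} \<and> I'' = {1..n} - I' \<and>
     labelled I' P' \<and> motzkin_walk (fst P') \<and> labelled I'' P'' \<and> nonneg_walk 0 (fst P'')}"

definition glue :: "(nat set \<times> lpath) \<times> (nat set \<times> lpath) \<Rightarrow> lpath" where
  "glue x = (case x of ((I', P'), (I'', P'')) \<Rightarrow> join (rev_path P') P'')"

lemma D_labelledE:
  assumes "x \<in> D_labelled n"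
  obtains I' P' I'' r v U w where "x = ((I', P'), (I'', (r, v)))" "I' \<subseteq> {1..n}"
    "I'' = {1..n} - I'" "rev_path P' = (1 # U, w)" "labelled I' (1 # U, w)" "excursion U"
    "labelled I'' (r, v)" "nonneg_walk 0 r"
proof -
  obtain I' P' I'' r v q where x: "x = ((I', P'), (I'', (r, v)))" "I' \<subseteq> {1..n}"
    "I'' = {1..n} - I'" "labelled I' P'" "fst P' = q @ [-1]" "excursion q"
    "labelled I'' (r, v)" "nonneg_walk 0 r"
    using assms by (auto simp: D_labelled_def motzkin_walk_def)
  have "rev_path P' = (1 # map uminus (rev q), snd (rev_path P'))"
    using x(5) by (simp add: rev_path_def)
  with x show ?thesis
    using that labelled_rev_path[of I' P'] by (metis excursion_neg_rev)
qed

lemma glue_into_B''_set: "glue ` D_labelled n \<subseteq> B''_set n"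
proof (rule image_subsetI)
  fix x assume "x \<in> D_labelled n"
  then obtain I' P' I'' r v U w where x: "x = ((I', P'), (I'', (r, v)))" "I' \<subseteq> {1..n}"
    "I'' = {1..n} - I'" "rev_path P' = (1 # U, w)" "labelled I' (1 # U, w)" "excursion U"
    "labelled I'' (r, v)" "nonneg_walk 0 r"
    by (rule D_labelledE)
  obtain s where s: "s \<in> {-1, 1}" "join (1 # U, w) (r, v) = (1 # U @ s # r, w @ v)"
    using join_obtain_step[of "(1 # U, w)" "(r, v)"] by auto
  have "labelled (I' \<union> I'') (join (1 # U, w) (r, v))"
    using x by (intro labelled_join) auto
  moreover have "I' \<union> I'' = {1..n}" using x(2,3) by auto
  ultimately show "glue x \<in> B''_set n"
    using s nonneg_walk_1_join[OF x(6) s(1) x(8)] by (auto simp: x(1,4) glue_def B''_set_iff)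
qed

lemma glue_inj: "inj_on glue (D_labelled n)"
proof (rule inj_onI)
  fix x y assume "x \<in> D_labelled n" "y \<in> D_labelled n" and eq: "glue x = glue y"
  obtain I1 P1 J1 r1 v1 U1 w1 where x: "x = ((I1, P1), (J1, (r1, v1)))"
    "J1 = {1..n} - I1" "rev_path P1 = (1 # U1, w1)" "labelled I1 (1 # U1, w1)" "excursion U1"
    "nonneg_walk 0 r1"
    using D_labelledE[OF \<open>x \<in> D_labelled n\<close>] by metis
  obtain I2 P2 J2 r2 v2 U2 w2 where y: "y = ((I2, P2), (J2, (r2, v2)))"
    "J2 = {1..n} - I2" "rev_path P2 = (1 # U2, w2)" "labelled I2 (1 # U2, w2)" "excursion U2"
    "nonneg_walk 0 r2"
    using D_labelledE[OF \<open>y \<in> D_labelled n\<close>] by metis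
  have joins: "join (1 # U1, w1) (r1, v1) = join (1 # U2, w2) (r2, v2)"
    using eq by (simp add: x(1,3) y(1,3) glue_def)
  obtain s1 s2 where "s1 \<in> {-1, 1}" "s2 \<in> {-1, 1}" "U1 @ s1 # r1 = U2 @ s2 # r2"
    using join_obtain_step[of "(1 # U1, w1)" "(r1, v1)"]
      join_obtain_step[of "(1 # U2, w2)" "(r2, v2)"] joins
    by (metis Cons_eq_appendI fst_conv list.inject)
  then have "U1 = U2"
    using excursion_split_unique x(5,6) y(5,6) by blast
  then have "(1 # U1, w1) = (1 # U2, w2)" "(r1, v1) = (r2, v2)"
    using join_inj[OF joins x(4) y(4)] by simp_all
  moreover from this have "P1 = P2" "I1 = I2"
    using x(3,4) y(3,4) by (metis rev_path_rev_path, auto simp: labelled_def)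
  ultimately show "x = y" by (simp add: x y)
qed

lemma B''_set_subset_glue: "B''_set n \<subseteq> glue ` D_labelled n"
proof
  fix P assume "P \<in> B''_set n"
  then obtain q where P: "labelled {1..n} P" "fst P = 1 # q" "nonneg_walk 1 q" "\<not> excursion q"
    by (auto simp: B''_set_iff)
  then have "set q \<subseteq> {-1, 0, 1}" by (cases P) (auto simp: labelled_def)
  then obtain u s r where q: "q = u @ s # r" "excursion u" "s \<in> {-1, 1}" "nonneg_walk 0 r"
    using nonneg_walk_1_split P(3,4) by blast
  define w where "w = take (length u + 2) (snd P)"
  define v where "v = drop (length u + 2) (snd P)"
  have lw: "length w = length (1 # u) + 1"
    using P(1,2) q(1) by (cases P) (auto simp: w_def labelled_def)
  have P_eq: "P = ((1 # u) @ s # r, w @ v)"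
    using P(2) q(1) by (cases P) (simp add: w_def v_def)
  note split = labelled_split[OF P(1)[unfolded P_eq] lw q(3)]
  have "set w \<union> set v = {1..n}" "set w \<inter> set v = {}"
    using P(1) by (auto simp: P_eq labelled_def)
  then have "((set w, rev_path (1 # u, w)), (set v, (r, v))) \<in> D_labelled n"
    using split(1,2) q(2,4) by (auto simp: D_labelled_def motzkin_walk_def fst_rev_path)
  moreover have "glue ((set w, rev_path (1 # u, w)), (set v, (r, v))) = P"
    using split(3) by (simp add: glue_def P_eq)
  ultimately show "P \<in> glue ` D_labelled n" by force
qed

definition relabel_pair ::
    "(nat set \<times> lpath) \<times> (nat set \<times> lpath) \<Rightarrow> (nat set \<times> lpath) \<times> (nat set \<times> lpath)" where
  "relabel_pair x =
     (case x of ((I', P'), (I'', P'')) \<Rightarrow> ((I', relabel I' P'), (I'', relabel I'' P'')))"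

definition unlabel_pair ::
    "(nat set \<times> lpath) \<times> (nat set \<times> lpath) \<Rightarrow> (nat set \<times> lpath) \<times> (nat set \<times> lpath)" where
  "unlabel_pair x =
     (case x of ((I', P'), (I'', P'')) \<Rightarrow> ((I', unlabel I' P'), (I'', unlabel I'' P'')))"

lemma D_set_bij: "bij_betw relabel_pair (D_set n) (D_labelled n)"
proof (rule bij_betw_byWitness[where f' = unlabel_pair])
  have fin: "finite I'" "finite I''" if "I' \<subseteq> {1..n}" "I'' = {1..n} - I'" for I' I''
    using that finite_subset by auto
  show "\<forall>x \<in> D_set n. unlabel_pair (relabel_pair x) = x"
    using fin unlabel_relabel
    by (auto simp: D_set_def relabel_pair_def unlabel_pair_def A_set_iff B_set_iff)
  show "\<forall>x \<in> D_labelled n. relabel_pair (unlabel_pair x) = x"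
    using fin relabel_unlabel
    by (auto simp: D_labelled_def relabel_pair_def unlabel_pair_def)
  show "relabel_pair ` D_set n \<subseteq> D_labelled n"
    using fin labelled_relabel
    by (auto simp: D_set_def D_labelled_def relabel_pair_def A_set_iff B_set_iff)
  show "unlabel_pair ` D_labelled n \<subseteq> D_set n"
    using fin labelled_unlabel
    by (auto simp: D_set_def D_labelled_def unlabel_pair_def A_set_iff B_set_iff)
qed

lemma D_set_bij_B''_set: "bij_betw (glue \<circ> relabel_pair) (D_set n) (B''_set n)"
proof (rule bij_betw_trans[OF D_set_bij])
  show "bij_betw glue (D_labelled n) (B''_set n)"
    unfolding bij_betw_def using glue_inj glue_into_B''_set B''_set_subset_glue by blast
qed

theorem proposition3:
  fixes n :: nat
  assumes "n \<ge> 1"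
  shows "(\<exists>f. bij_betw f (B0_set n) ({1..n} \<times> B_set (n - 1)))
       \<and> (\<exists>g. bij_betw g (B'_set n) (A_set n))
       \<and> (\<exists>h. bij_betw h (B''_set n) (D_set n))"
proof (intro conjI)
  show "\<exists>f. bij_betw f (B0_set n) ({1..n} \<times> B_set (n - 1))"
    using B0_set_bij by blast
  show "\<exists>g. bij_betw g (B'_set n) (A_set n)"
    using B'_set_bij by blast
  show "\<exists>h. bij_betw h (B''_set n) (D_set n)"
    using bij_betw_inv_into[OF D_set_bij_B''_set] by blast
qed

end
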